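(* For every integer $L\ge 0$, every integer $l\ge 1$ and every integer $n\ge 0$, $$S_L(n+1,l)=\sum_{k=l-1}^{n}\binom{n}{k}\binom{n+1}{k}^{L}S_L(k,l-1),$$ with $S_L(0,0)=1$ and $S_L(n,0)=0$ for $n\ge1$. Consequently all $S_L(n,l)$ are nonnegative integers (positive for $1\le l\le n$).
   Context: For an integer $L\ge 0$ let ${}_0F_L(z)=\sum_{n=0}^{\infty}\frac{z^n}{(n!)^{L+1}}$. Define the numbers $S_L(n,l)$ ($n,l\ge 0$; with $S_L(n,l)=0$ for $l>n$) by the formal power series identities $\frac{({}_0F_L(z)-1)^l}{l!}=\sum_{n\ge l}\frac{S_L(n,l)}{(n!)^{L+1}}z^n$ for each $l\ge 0$; equivalently $\exp\big(x({}_0F_L(z)-1)\big)=\sum_{n\ge0}\Big[\sum_{k=0}^{n}S_L(n,k)x^k\Big]\frac{z^n}{(n!)^{L+1}}$. For $L=0$ these are the Stirling numbers of the second kind. *)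

theory Defs
  imports Complex_Main "HOL-Computational_Algebra.Formal_Power_Series"
begin

definition hyp0F :: "nat \<Rightarrow> real fps" where
  "hyp0F L = Abs_fps (\<lambda>n. 1 / (fact n) ^ (L + 1))"

definition SL :: "nat \<Rightarrow> nat \<Rightarrow> nat \<Rightarrow> real" where
  "SL L n l = (fact n) ^ (L + 1) * fps_nth (fps_const (1 / fact l) * (hyp0F L - 1) ^ l) n"

end

theory Submission
  imports Defs
begin

text \<open>Let \<open>F = 0F_L - 1\<close>. Differentiating \<open>F\<^sup>l / l!\<close> gives \<open>F\<^sup>l\<^sup>-\<^sup>1 / (l-1)! \<cdot> F'\<close>, and since
  \<open>F'\<close> has coefficients \<open>(m+1) / ((m+1)!)\<^sup>L\<^sup>+\<^sup>1\<close>, comparing coefficients of \<open>z\<^sup>n\<close> and renormalising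
  by \<open>(n!)\<^sup>L\<^sup>+\<^sup>1\<close> turns the factorials into \<open>C(n,k) C(n+1,k)\<^sup>L\<close>. The recurrence has nonnegative
  integer coefficients, so integrality follows by induction on \<open>n\<close>; positivity comes from the summand
  \<open>k = l-1\<close>, because \<open>F\<close> starts with \<open>z\<close> and hence \<open>S_L(m,m) = (m!)\<^sup>L\<close>.\<close>

unbundle fps_syntax

definition SL_series :: "nat \<Rightarrow> nat \<Rightarrow> real fps" where
  "SL_series L l = fps_const (1 / fact l) * (hyp0F L - 1) ^ l"

lemma SL_conv_SL_series: "SL L n l = fact n ^ (L + 1) * SL_series L l $ n"
  by (simp add: SL_def SL_series_def)

lemma subdegree_hyp0F_minus_one: "subdegree (hyp0F L - 1) = 1"
  by (rule subdegreeI) (simp_all add: hyp0F_def)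

lemma SL_eq_0_if_less: "n < l \<Longrightarrow> SL L n l = 0"
  using fps_pow_nth_below_subdegree[of n l "hyp0F L - 1"]
  by (simp only: SL_def subdegree_hyp0F_minus_one) simp

lemma SL_diag: "SL L n n = fact n ^ L"
proof -
  have "((hyp0F L - 1) ^ n) $ n = 1"
    using fps_pow_base[of "hyp0F L - 1" n]
    unfolding subdegree_hyp0F_minus_one by (simp add: hyp0F_def)
  then show ?thesis
    by (simp add: SL_def)
qed

lemma SL_0_right: "n \<ge> 1 \<Longrightarrow> SL L n 0 = 0"
  by (simp add: SL_def)

lemma fps_deriv_power_div_fact:
  fixes F :: "'a::field_char_0 fps"
  shows "fps_deriv (fps_const (1 / fact (Suc l)) * F ^ Suc l)
           = fps_const (1 / fact l) * F ^ l * fps_deriv F"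
proof -
  have "1 / fact (Suc l) * of_nat (Suc l) = (1 / fact l :: 'a)"
    using of_nat_neq_0[of l, where 'a='a] by simp
  then have const: "fps_const (1 / fact (Suc l)) * fps_const (of_nat (Suc l)) = fps_const (1 / fact l :: 'a)"
    by (metis fps_const_mult)
  have "fps_deriv (fps_const (1 / fact (Suc l)) * F ^ Suc l)
          = fps_const (1 / fact (Suc l)) * fps_const (of_nat (Suc l)) * F ^ l * fps_deriv F"
    unfolding fps_deriv_mult_const_left fps_deriv_power diff_Suc_1 by (simp only: mult_ac)
  then show ?thesis
    by (simp only: const)
qed

lemma fact_power_ratio_eq_choose:
  assumes "i \<le> n"
  shows "fact (Suc n) ^ (L + 1) * real (Suc (n - i)) / (real (Suc n) * (fact i * fact (Suc (n - i))) ^ (L + 1))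
           = real (n choose i) * real (Suc n choose i) ^ L"
proof -
  have choose_Suc: "real (Suc n choose i) = fact (Suc n) / (fact i * fact (Suc (n - i)))"
    using binomial_fact[of i "Suc n"] assms by (simp add: Suc_diff_le)
  have "Suc (n - i) * (Suc n choose i) = Suc n * (n choose i)"
    using binomial_absorb_comp[of "Suc n" i] by (metis Suc_diff_le assms diff_Suc_1)
  then have absorb: "real (Suc (n - i)) * real (Suc n choose i) = real (Suc n) * real (n choose i)"
    by (metis of_nat_mult)
  have "fact (Suc n) ^ (L + 1) * real (Suc (n - i)) / (real (Suc n) * (fact i * fact (Suc (n - i))) ^ (L + 1))
          = real (Suc (n - i)) * real (Suc n choose i) / real (Suc n) * real (Suc n choose i) ^ L"
    by (simp add: choose_Suc power_divide field_simps)
  also have "\<dots> = real (n choose i) * real (Suc n choose i) ^ L"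
    unfolding absorb by simp
  finally show ?thesis .
qed

lemma SL_recurrence:
  "SL L (Suc n) (Suc l) = (\<Sum>k = l..n. real (n choose k) * real (Suc n choose k) ^ L * SL L k l)"
proof -
  have "fps_deriv (SL_series L (Suc l)) = SL_series L l * fps_deriv (hyp0F L - 1)"
    unfolding SL_series_def by (rule fps_deriv_power_div_fact)
  then have "real (Suc n) * SL_series L (Suc l) $ Suc n = (SL_series L l * fps_deriv (hyp0F L - 1)) $ n"
    by (metis Suc_eq_plus1 fps_deriv_nth)
  also have "\<dots> = (\<Sum>i = 0..n. SL_series L l $ i * (real (Suc (n - i)) / fact (Suc (n - i)) ^ (L + 1)))"
    unfolding fps_mult_nth by (intro sum.cong refl) (simp add: hyp0F_def)
  finally have deriv_coeff: "SL_series L (Suc l) $ Suc n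
      = (\<Sum>i = 0..n. SL_series L l $ i * (real (Suc (n - i)) / fact (Suc (n - i)) ^ (L + 1))) / real (Suc n)"
    by (simp add: field_simps del: of_nat_Suc)
  have "SL L (Suc n) (Suc l)
          = (\<Sum>i = 0..n. fact (Suc n) ^ (L + 1) * real (Suc (n - i))
               / (real (Suc n) * (fact i * fact (Suc (n - i))) ^ (L + 1)) * SL L i l)"
    unfolding SL_conv_SL_series[of L "Suc n"] deriv_coeff sum_divide_distrib sum_distrib_left
    by (intro sum.cong refl) (simp add: SL_conv_SL_series power_mult_distrib)
  also have "\<dots> = (\<Sum>i = 0..n. real (n choose i) * real (Suc n choose i) ^ L * SL L i l)"
    by (intro sum.cong refl) (subst fact_power_ratio_eq_choose, simp_all)
  also have "\<dots> = (\<Sum>k = l..n. real (n choose k) * real (Suc n choose k) ^ L * SL L k l)"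
    by (rule sum.mono_neutral_cong_right) (auto simp: SL_eq_0_if_less)
  finally show ?thesis .
qed

lemma sum_in_Nats: "(\<And>x. x \<in> A \<Longrightarrow> f x \<in> \<nat>) \<Longrightarrow> sum f A \<in> \<nat>"
  by (induction A rule: infinite_finite_induct) auto

lemma SL_in_Nats: "SL L n l \<in> \<nat>"
proof (induction n arbitrary: l rule: less_induct)
  case (less n)
  show ?case
  proof (cases "n = 0 \<or> l = 0")
    case True
    then show ?thesis
      by (cases n; cases l) (simp_all add: SL_diag SL_eq_0_if_less SL_0_right)
  next
    case False
    then obtain m j where n: "n = Suc m" and l: "l = Suc j"
      by (metis not0_implies_Suc)
    have "real (m choose k) * real (Suc m choose k) ^ L * SL L k j \<in> \<nat>" if "k \<le> m" for k
    proof -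
      have "real (m choose k) * real (Suc m choose k) ^ L \<in> \<nat>"
        by (metis of_nat_in_Nats of_nat_mult of_nat_power)
      moreover have "SL L k j \<in> \<nat>"
        using less.IH that n by simp
      ultimately show ?thesis
        by (rule Nats_mult)
    qed
    then show ?thesis
      unfolding n l SL_recurrence by (auto intro: sum_in_Nats)
  qed
qed

lemma SL_nonneg: "0 \<le> SL L n l"
  using SL_in_Nats[of L n l] by (auto elim: Nats_cases)

lemma SL_pos:
  assumes "1 \<le> l" and "l \<le> n"
  shows "0 < SL L n l"
proof -
  obtain m j where n: "n = Suc m" and l: "l = Suc j" and "j \<le> m"
    using assms by (cases n; cases l) auto
  have "0 < real (m choose j) * real (Suc m choose j) ^ L * SL L j j"
    using \<open>j \<le> m\<close> by (simp add: SL_diag)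
  also have "\<dots> \<le> (\<Sum>k = j..m. real (m choose k) * real (Suc m choose k) ^ L * SL L k j)"
    using \<open>j \<le> m\<close> by (intro member_le_sum) (simp_all add: SL_nonneg)
  finally show ?thesis
    unfolding n l SL_recurrence .
qed

theorem mainTheorem2:
  shows "(\<forall>L l n. l \<ge> 1 \<longrightarrow>
            SL L (n + 1) l =
              (\<Sum>k = l - 1..n. real (n choose k) * real ((n + 1) choose k) ^ L * SL L k (l - 1)))
       \<and> (\<forall>L. SL L 0 0 = 1)
       \<and> (\<forall>L n. n \<ge> 1 \<longrightarrow> SL L n 0 = 0)
       \<and> (\<forall>L n l. \<exists>m::nat. SL L n l = real m)
       \<and> (\<forall>L n l. 1 \<le> l \<and> l \<le> n \<longrightarrow> SL L n l > 0)"
proof (intro conjI allI impI)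
  fix L l n :: nat
  assume "l \<ge> 1"
  then show "SL L (n + 1) l
      = (\<Sum>k = l - 1..n. real (n choose k) * real ((n + 1) choose k) ^ L * SL L k (l - 1))"
    using SL_recurrence[of L n "l - 1"] by simp
next
  fix L :: nat
  show "SL L 0 0 = 1"
    using SL_diag[of L 0] by simp
next
  fix L n :: nat
  assume "n \<ge> 1"
  then show "SL L n 0 = 0"
    by (rule SL_0_right)
next
  fix L n l :: nat
  show "\<exists>m::nat. SL L n l = real m"
    using SL_in_Nats[of L n l] by (auto elim: Nats_cases)
next
  fix L n l :: nat
  assume "1 \<le> l \<and> l \<le> n"
  then show "SL L n l > 0"
    using SL_pos by blast
qed

end
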